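(* Let $F_1,F_2:\mathbb{R}^n\rightrightarrows\mathbb{R}^p$ be nearly convex set-valued mappings with $\operatorname{ri}(\operatorname{dom} F_1)\cap\operatorname{ri}(\operatorname{dom} F_2)\neq\emptyset$. Then $$\operatorname{ri}\big(\operatorname{gph}(F_1+F_2)\big)=\{(x,y)\in\mathbb{R}^n\times\mathbb{R}^p: x\in\operatorname{ri}(\operatorname{dom} F_1)\cap\operatorname{ri}(\operatorname{dom} F_2),\ y\in\operatorname{ri} F_1(x)+\operatorname{ri} F_2(x)\}.$$
   Context: A set $\Omega\subset\mathbb{R}^k$ is nearly convex if there is a convex set $C$ with $C\subset\Omega\subset\overline{C}$. For an arbitrary set $\Omega$, $\operatorname{ri}\Omega=\{a\in\Omega:\exists\delta>0,\ B(a;\delta)\cap\operatorname{aff}\Omega\subset\Omega\}$. For $F:\mathbb{R}^n\rightrightarrows\mathbb{R}^p$: $\operatorname{dom} F=\{x:F(x)\neq\emptyset\}$, $\operatorname{gph} F=\{(x,y):y\in F(x)\}$; $F$ is nearly convex if $\operatorname{gph} F$ is nearly convex. $(F_1+F_2)(x)=F_1(x)+F_2(x)$ (Minkowski sum, empty if either summand is empty). *)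

theory Defs
  imports "HOL-Analysis.Analysis"
begin

definition nearly_convex :: "'a::real_normed_vector set \<Rightarrow> bool" where
  "nearly_convex \<Omega> \<longleftrightarrow> (\<exists>C. convex C \<and> C \<subseteq> \<Omega> \<and> \<Omega> \<subseteq> closure C)"

definition sv_dom :: "('a \<Rightarrow> 'b set) \<Rightarrow> 'a set" where
  "sv_dom F = {x. F x \<noteq> {}}"

definition sv_gph :: "('a \<Rightarrow> 'b set) \<Rightarrow> ('a \<times> 'b) set" where
  "sv_gph F = {(x, y). y \<in> F x}"

definition sv_sum :: "('a \<Rightarrow> 'b::plus set) \<Rightarrow> ('a \<Rightarrow> 'b set) \<Rightarrow> 'a \<Rightarrow> 'b set" where
  "sv_sum F1 F2 x = {y1 + y2 | y1 y2. y1 \<in> F1 x \<and> y2 \<in> F2 x}"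

end

theory Submission
  imports Defs
begin

text \<open>A nearly convex set has the same relative interior and closure as any convex set it is
  squeezed between; in particular its relative interior is such a convex set. Hence the
  relative-interior calculus of convex sets (linear images, products, intersections with affine
  sets) carries over to nearly convex sets. The graph of \<open>F\<^sub>1 + F\<^sub>2\<close> is the image of
  \<open>(gph F\<^sub>1 \<times> gph F\<^sub>2) \<inter> {x = x'}\<close> under \<open>((x,a),(x',b)) \<mapsto> (x, a + b)\<close>, and the
  relative interior of a nearly convex graph is described fibrewise over the relative interior
  of its domain.\<close>

lemma rel_interior_between_convex_closure:
  fixes C S :: "'a::euclidean_space set"
  assumes "convex C" "C \<subseteq> S" "S \<subseteq> closure C"
  shows "rel_interior S = rel_interior C"
proof -
  have "affine hull S = affine hull C"
  proof (rule subset_antisym)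
    have "affine hull S \<subseteq> affine hull (closure C)" using assms(3) by (rule hull_mono)
    then show "affine hull S \<subseteq> affine hull C" by simp
    show "affine hull C \<subseteq> affine hull S" using assms(2) by (rule hull_mono)
  qed
  then have "rel_interior C \<subseteq> rel_interior S" "rel_interior S \<subseteq> rel_interior (closure C)"
    using rel_interior_mono[OF assms(2)] rel_interior_mono[OF assms(3)] by simp_all
  then show ?thesis using convex_rel_interior_closure[OF assms(1)] by blast
qed

lemma nearly_convex_iff_rel_interior:
  fixes S :: "'a::euclidean_space set"
  shows "nearly_convex S \<longleftrightarrow> convex (rel_interior S) \<and> S \<subseteq> closure (rel_interior S)"
proof
  assume "nearly_convex S"
  then obtain C where C: "convex C" "C \<subseteq> S" "S \<subseteq> closure C"
    unfolding nearly_convex_def by blast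
  then have "rel_interior S = rel_interior C" by (rule rel_interior_between_convex_closure)
  then show "convex (rel_interior S) \<and> S \<subseteq> closure (rel_interior S)"
    using C convex_rel_interior[OF C(1)] convex_closure_rel_interior[OF C(1)] by simp
next
  assume "convex (rel_interior S) \<and> S \<subseteq> closure (rel_interior S)"
  then show "nearly_convex S"
    unfolding nearly_convex_def using rel_interior_subset by blast
qed

lemma nearly_convex_rel_interior_rel_interior:
  fixes S :: "'a::euclidean_space set"
  assumes "nearly_convex S"
  shows "rel_interior (rel_interior S) = rel_interior S"
  using assms rel_interior_between_convex_closure[OF _ rel_interior_subset]
  unfolding nearly_convex_iff_rel_interior by metis

lemma nearly_convex_linear_image:
  fixes f :: "'a::euclidean_space \<Rightarrow> 'b::euclidean_space"
  assumes "linear f" "nearly_convex S"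
  shows "nearly_convex (f ` S)" and "rel_interior (f ` S) = f ` rel_interior S"
proof -
  define C where "C = rel_interior S"
  have C: "convex C" "S \<subseteq> closure C"
    using assms(2) unfolding C_def nearly_convex_iff_rel_interior by auto
  have fC: "convex (f ` C)" using convex_linear_image[OF assms(1) C(1)] .
  have sub: "f ` C \<subseteq> f ` S" unfolding C_def using rel_interior_subset by blast
  have "f ` S \<subseteq> f ` closure C" using C(2) by (rule image_mono)
  also have "\<dots> \<subseteq> closure (f ` C)" by (rule closure_linear_image_subset[OF assms(1)])
  finally have sup: "f ` S \<subseteq> closure (f ` C)" .
  show "nearly_convex (f ` S)"
    unfolding nearly_convex_def using fC sub sup by blast
  have "rel_interior (f ` S) = rel_interior (f ` C)"
    by (rule rel_interior_between_convex_closure[OF fC sub sup])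
  also have "\<dots> = f ` rel_interior C"
    by (rule rel_interior_convex_linear_image[OF assms(1) C(1), symmetric])
  finally show "rel_interior (f ` S) = f ` rel_interior S"
    unfolding C_def nearly_convex_rel_interior_rel_interior[OF assms(2)] .
qed

lemma nearly_convex_Times:
  fixes S :: "'a::euclidean_space set" and T :: "'b::euclidean_space set"
  assumes "nearly_convex S" "nearly_convex T"
  shows "nearly_convex (S \<times> T)"
    and "rel_interior (S \<times> T) = rel_interior S \<times> rel_interior T"
proof -
  define C where "C = rel_interior S \<times> rel_interior T"
  have conv: "convex (rel_interior S)" "convex (rel_interior T)"
    and cl: "S \<subseteq> closure (rel_interior S)" "T \<subseteq> closure (rel_interior T)"
    using assms unfolding nearly_convex_iff_rel_interior by blast+
  have cC: "convex C" unfolding C_def using conv by (rule convex_Times)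
  have sub: "C \<subseteq> S \<times> T"
    unfolding C_def using rel_interior_subset[of S] rel_interior_subset[of T] by blast
  have sup: "S \<times> T \<subseteq> closure C" unfolding C_def closure_Times using cl by blast
  show "nearly_convex (S \<times> T)" unfolding nearly_convex_def using cC sub sup by blast
  have "rel_interior (S \<times> T) = rel_interior C"
    by (rule rel_interior_between_convex_closure[OF cC sub sup])
  also have "\<dots> = C"
    unfolding C_def rel_interior_Times[OF conv]
    using assms by (simp add: nearly_convex_rel_interior_rel_interior)
  finally show "rel_interior (S \<times> T) = rel_interior S \<times> rel_interior T"
    unfolding C_def .
qed

lemma nearly_convex_Int_affine:
  fixes S M :: "'a::euclidean_space set"
  assumes "nearly_convex S" "affine M" "rel_interior S \<inter> M \<noteq> {}"
  shows "nearly_convex (S \<inter> M)" and "rel_interior (S \<inter> M) = rel_interior S \<inter> M"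
proof -
  define C where "C = rel_interior S \<inter> M"
  have conv: "convex (rel_interior S)" and cl: "S \<subseteq> closure (rel_interior S)"
    using assms(1) unfolding nearly_convex_iff_rel_interior by blast+
  have riri: "rel_interior (rel_interior S) = rel_interior S"
    using nearly_convex_rel_interior_rel_interior[OF assms(1)] .
  have ne: "rel_interior (rel_interior S) \<inter> M \<noteq> {}" using assms(3) riri by simp
  have cC: "convex C" unfolding C_def using conv affine_imp_convex[OF assms(2)] by (rule convex_Int)
  have sub: "C \<subseteq> S \<inter> M" unfolding C_def using rel_interior_subset by blast
  have sup: "S \<inter> M \<subseteq> closure C"
    unfolding C_def convex_affine_closure_Int[OF conv assms(2) ne] using cl by blast
  show "nearly_convex (S \<inter> M)" unfolding nearly_convex_def using cC sub sup by blast
  have "rel_interior (S \<inter> M) = rel_interior C"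
    by (rule rel_interior_between_convex_closure[OF cC sub sup])
  also have "\<dots> = rel_interior S \<inter> M"
    unfolding C_def convex_affine_rel_interior_Int[OF conv assms(2) ne] riri ..
  finally show "rel_interior (S \<inter> M) = rel_interior S \<inter> M" .
qed

lemma affine_linear_vimage_sing:
  assumes "linear f"
  shows "affine (f -` {c})"
  unfolding affine_def
  by (simp add: linear_add[OF assms] linear_scale[OF assms] flip: scaleR_add_left)

lemma rel_interior_nearly_convex_fibre:
  fixes G :: "('a::euclidean_space \<times> 'b::euclidean_space) set"
  assumes "nearly_convex G" "x \<in> rel_interior (fst ` G)"
  shows "rel_interior {y. (x, y) \<in> G} = {y. (x, y) \<in> rel_interior G}"
proof -
  define M :: "('a \<times> 'b) set" where "M = fst -` {x}"
  have M: "affine M" unfolding M_def by (rule affine_linear_vimage_sing[OF linear_fst])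
  have "x \<in> fst ` rel_interior G"
    using assms nearly_convex_linear_image(2)[OF linear_fst] by blast
  then have ne: "rel_interior G \<inter> M \<noteq> {}" unfolding M_def by force
  have fibre: "{y. (x, y) \<in> H} = snd ` (H \<inter> M)" for H :: "('a \<times> 'b) set"
    unfolding M_def by force
  show ?thesis
    unfolding fibre
    using nearly_convex_Int_affine[OF assms(1) M ne]
      nearly_convex_linear_image(2)[OF linear_snd] by metis
qed

lemma rel_interior_nearly_convex_graph:
  fixes G :: "('a::euclidean_space \<times> 'b::euclidean_space) set"
  assumes "nearly_convex G"
  shows "(x, y) \<in> rel_interior G \<longleftrightarrow>
    x \<in> rel_interior (fst ` G) \<and> y \<in> rel_interior {y. (x, y) \<in> G}"
  using rel_interior_nearly_convex_fibre[OF assms]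
    nearly_convex_linear_image(2)[OF linear_fst assms] by force

lemma sv_dom_eq_fst_sv_gph: "sv_dom F = fst ` sv_gph F"
  unfolding sv_dom_def sv_gph_def by force

lemma rel_interior_sv_dom:
  fixes F :: "'a::euclidean_space \<Rightarrow> 'b::euclidean_space set"
  assumes "nearly_convex (sv_gph F)"
  shows "rel_interior (sv_dom F) = fst ` rel_interior (sv_gph F)"
  unfolding sv_dom_eq_fst_sv_gph using nearly_convex_linear_image(2)[OF linear_fst assms] .

lemma rel_interior_sv_gph:
  fixes F :: "'a::euclidean_space \<Rightarrow> 'b::euclidean_space set"
  assumes "nearly_convex (sv_gph F)"
  shows "(x, y) \<in> rel_interior (sv_gph F) \<longleftrightarrow>
    x \<in> rel_interior (sv_dom F) \<and> y \<in> rel_interior (F x)"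
  using rel_interior_nearly_convex_graph[OF assms]
  by (simp add: sv_dom_eq_fst_sv_gph) (simp add: sv_gph_def)

theorem theorem3p7:
  fixes F1 F2 :: "'n::euclidean_space \<Rightarrow> 'p::euclidean_space set"
  assumes "nearly_convex (sv_gph F1)" and "nearly_convex (sv_gph F2)"
    and "rel_interior (sv_dom F1) \<inter> rel_interior (sv_dom F2) \<noteq> {}"
  shows "rel_interior (sv_gph (sv_sum F1 F2)) =
    {(x, y). x \<in> rel_interior (sv_dom F1) \<inter> rel_interior (sv_dom F2) \<and>
       y \<in> {y1 + y2 | y1 y2. y1 \<in> rel_interior (F1 x) \<and> y2 \<in> rel_interior (F2 x)}}"
proof -
  define G where "G = sv_gph F1 \<times> sv_gph F2"
  define M :: "(('n \<times> 'p) \<times> ('n \<times> 'p)) set"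
    where "M = (\<lambda>((x, a), (x', b)). x - x') -` {0}"
  define L :: "('n \<times> 'p) \<times> ('n \<times> 'p) \<Rightarrow> 'n \<times> 'p"
    where "L = (\<lambda>((x, a), (x', b)). (x, a + b))"
  have L: "linear L" unfolding L_def by (auto simp: linear_iff algebra_simps)
  have "linear (\<lambda>((x, a), (x', b)). (x::'n) - x')" by (auto simp: linear_iff algebra_simps)
  then have M: "affine M" unfolding M_def by (rule affine_linear_vimage_sing)
  have sum_image: "L ` (A \<times> B \<inter> M) = {(x, a + b) | x a b. (x, a) \<in> A \<and> (x, b) \<in> B}" for A B
    unfolding L_def M_def by force
  have G: "nearly_convex G" "rel_interior G = rel_interior (sv_gph F1) \<times> rel_interior (sv_gph F2)"
    unfolding G_def using nearly_convex_Times[OF assms(1,2)] by simp_all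
  obtain x0 where "x0 \<in> rel_interior (sv_dom F1)" "x0 \<in> rel_interior (sv_dom F2)"
    using assms(3) by blast
  then have "x0 \<in> fst ` rel_interior (sv_gph F1)" "x0 \<in> fst ` rel_interior (sv_gph F2)"
    using rel_interior_sv_dom[OF assms(1)] rel_interior_sv_dom[OF assms(2)] by simp_all
  then obtain y1 y2 where "(x0, y1) \<in> rel_interior (sv_gph F1)" "(x0, y2) \<in> rel_interior (sv_gph F2)"
    by force
  then have "((x0, y1), (x0, y2)) \<in> rel_interior G \<inter> M" unfolding G(2) M_def by simp
  then have "rel_interior G \<inter> M \<noteq> {}" by blast
  note GM = nearly_convex_Int_affine[OF G(1) M this]
  have "sv_gph (sv_sum F1 F2) = L ` (G \<inter> M)"
    unfolding G_def sum_image by (auto simp: sv_gph_def sv_sum_def)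
  then have "rel_interior (sv_gph (sv_sum F1 F2)) = L ` (rel_interior G \<inter> M)"
    using nearly_convex_linear_image(2)[OF L GM(1)] GM(2) by simp
  also have "\<dots> = {(x, a + b) | x a b.
      (x, a) \<in> rel_interior (sv_gph F1) \<and> (x, b) \<in> rel_interior (sv_gph F2)}"
    unfolding G(2) sum_image ..
  finally show ?thesis
    using rel_interior_sv_gph[OF assms(1)] rel_interior_sv_gph[OF assms(2)] by auto
qed

end
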